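(* Let $\psi$ be a branching mechanism with $\boldsymbol{\delta}>1$, and define for $v\in(0,\infty)$ $$I(v)=\int_v^\infty\frac{\mathrm{d}b}{\sqrt{\int_v^b\psi(a)\,\mathrm{d}a}}.$$ Then there exists a constant $C\in(0,\infty)$, depending only on $\psi$, such that for all $v\in(1,\infty)$ and all $r\in(0,\infty)$ with $r\le I(v)$, one has $v\le\psi'^{-1}(4Cr^{-2})$, where $\psi'^{-1}$ is the inverse of $\psi'$.
   Context: A branching mechanism is $\psi(\lambda)=\alpha\lambda+\beta\lambda^2+\int_{(0,\infty)}(e^{-\lambda r}-1+\lambda r)\pi(\mathrm{d}r)$ with $\alpha,\beta\ge0$ and $\pi$ a Borel measure on $(0,\infty)$ with $\int(r\wedge r^2)\pi(\mathrm{d}r)<\infty$. $\boldsymbol{\delta}=\sup\{c\ge0:\exists C\in(0,\infty),\ C\psi(\mu)\mu^{-c}\le\psi(\lambda)\lambda^{-c}\ \forall\,1\le\mu\le\lambda\}$. (Under $\boldsymbol{\delta}>1$ the integral $I(v)$ is finite.) *)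

theory Defs
  imports "HOL-Analysis.Analysis"
begin

text \<open>A branching mechanism: alpha, beta >= 0 and pi a Borel measure on (0,infinity)
  (represented as a Borel measure on the reals with no mass on (-infinity,0])
  with finite integral of min r (r^2).\<close>
definition branching_params :: "real \<Rightarrow> real \<Rightarrow> real measure \<Rightarrow> bool" where
  "branching_params \<alpha> \<beta> \<pi> \<longleftrightarrow>
     \<alpha> \<ge> 0 \<and> \<beta> \<ge> 0 \<and> sets \<pi> = sets borel \<and> emeasure \<pi> {..0} = 0 \<and>
     (\<integral>\<^sup>+ r. ennreal (min r (r\<^sup>2)) \<partial>\<pi>) < \<infinity>"

definition psi :: "real \<Rightarrow> real \<Rightarrow> real measure \<Rightarrow> real \<Rightarrow> real" where
  "psi \<alpha> \<beta> \<pi> l = \<alpha> * l + \<beta> * l\<^sup>2 +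
     (\<integral>r. (exp (- l * r) - 1 + l * r) \<partial>\<pi>)"

definition delta_exp :: "(real \<Rightarrow> real) \<Rightarrow> ereal" where
  "delta_exp \<Psi> = Sup {ereal c | c. c \<ge> 0 \<and> (\<exists>C>0. \<forall>m l. 1 \<le> m \<and> m \<le> l \<longrightarrow>
       C * \<Psi> m * m powr (- c) \<le> \<Psi> l * l powr (- c))}"

definition I_fun :: "(real \<Rightarrow> real) \<Rightarrow> real \<Rightarrow> ennreal" where
  "I_fun \<Psi> v = (\<integral>\<^sup>+ b. indicator {v<..} b * ennreal (1 / sqrt (integral {v..b} \<Psi>)) \<partial>lborel)"

end

theory Submission
  imports Defs
begin

text \<open>The kernel \<open>e\<^sup>-\<^sup>x - 1 + x\<close> of the Levy-Khintchine integral yields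
  \<open>\<psi>(l) \<le> l \<psi>'(l) \<le> 2 \<psi>(l)\<close>, and \<open>\<delta> > 1\<close> gives \<open>\<psi>(l) \<ge> C \<psi>(v) (l/v)\<^sup>c\<close> for some \<open>c > 1\<close>
  and all \<open>l \<ge> v \<ge> 1\<close>. Bounding \<open>\<integral>\<^sub>v\<^sup>b \<psi>\<close> from below by \<open>(b - v)/2 \<cdot> \<psi>((v + b)/2)\<close>
  then shows \<open>I(v) \<le> K \<surd>(v / \<psi>(v))\<close>, so \<open>r \<le> I(v)\<close> forces \<open>\<psi>'(v) \<le> 2\<psi>(v)/v \<le> 2K\<^sup>2/r\<^sup>2\<close>.
  As \<open>\<psi>'\<close> is continuous, strictly increasing and unbounded, \<open>\<psi>'\<^sup>-\<^sup>1(2K\<^sup>2/r\<^sup>2)\<close> exists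
  and is at least \<open>v\<close>.\<close>

section \<open>Elementary bounds on the Levy kernel\<close>

lemma one_sub_exp_minus_le: "1 - exp (- x) \<le> (x::real)"
  using exp_ge_add_one_self[of "- x"] by simp

lemma exp_minus_sub_one_add_le: "exp (- x) - 1 + x \<le> x * (1 - exp (- x :: real))"
proof -
  have "exp (- x) * (1 + x) \<le> exp (- x) * exp x"
    by (intro mult_left_mono) auto
  then show ?thesis by (simp add: algebra_simps flip: exp_add)
qed

lemma mult_one_sub_exp_minus_le:
  assumes "(0::real) \<le> x"
  shows "x * (1 - exp (- x)) \<le> 2 * (exp (- x) - 1 + x)"
proof -
  define f where "f t = 2 * (exp (- t) - 1 + t) - t * (1 - exp (- t))" for t :: real
  have "f 0 \<le> f x"
  proof (rule DERIV_nonneg_imp_nondecreasing[OF assms])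
    fix t :: real
    have "0 \<le> exp (- t) * (exp t - 1 - t)"
      using exp_ge_add_one_self[of t] by (intro mult_nonneg_nonneg) (auto simp: algebra_simps)
    then have "0 \<le> 1 - exp (- t) - t * exp (- t)"
      by (simp add: algebra_simps flip: exp_add)
    moreover have "(f has_real_derivative 1 - exp (- t) - t * exp (- t)) (at t)"
      unfolding f_def by (auto intro!: derivative_eq_intros simp: algebra_simps)
    ultimately show "\<exists>y. (f has_real_derivative y) (at t) \<and> 0 \<le> y" by blast
  qed
  then show ?thesis by (simp add: f_def)
qed

definition levy_kernel :: "real \<Rightarrow> real \<Rightarrow> real" where
  "levy_kernel l r = exp (- l * r) - 1 + l * r"

definition levy_kernel' :: "real \<Rightarrow> real \<Rightarrow> real" where
  "levy_kernel' l r = r * (1 - exp (- l * r))"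

lemma levy_kernel_measurable [measurable]: "levy_kernel l \<in> borel_measurable borel"
  unfolding levy_kernel_def by measurable

lemma levy_kernel'_measurable [measurable]: "levy_kernel' l \<in> borel_measurable borel"
  unfolding levy_kernel'_def by measurable

lemma has_real_derivative_levy_kernel:
  "((\<lambda>l. levy_kernel l r) has_real_derivative levy_kernel' l r) (at l)"
  unfolding levy_kernel_def levy_kernel'_def
  by (auto intro!: derivative_eq_intros simp: algebra_simps)

lemma levy_kernel_nonneg: "0 \<le> levy_kernel l r"
  using one_sub_exp_minus_le[of "l * r"] by (simp add: levy_kernel_def)

lemma levy_kernel_pos:
  assumes "0 < l" "0 < r"
  shows "0 < levy_kernel l r"
proof -
  have "0 < l * r * (1 - exp (- (l * r)))" using assms by simp
  with mult_one_sub_exp_minus_le[of "l * r"] assms show ?thesis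
    unfolding levy_kernel_def by (smt (verit) mult_minus_left mult_nonneg_nonneg)
qed

lemma levy_kernel_le_mult_levy_kernel': "levy_kernel l r \<le> l * levy_kernel' l r"
  using exp_minus_sub_one_add_le[of "l * r"]
  by (simp add: levy_kernel_def levy_kernel'_def algebra_simps)

lemma mult_levy_kernel'_le: "0 \<le> l \<Longrightarrow> 0 \<le> r \<Longrightarrow> l * levy_kernel' l r \<le> 2 * levy_kernel l r"
  using mult_one_sub_exp_minus_le[of "l * r"]
  by (simp add: levy_kernel_def levy_kernel'_def algebra_simps)

lemma levy_kernel'_nonneg: "0 \<le> l \<Longrightarrow> 0 \<le> r \<Longrightarrow> 0 \<le> levy_kernel' l r"
  by (simp add: levy_kernel'_def)

lemma levy_kernel'_le:
  assumes "0 \<le> l" "0 \<le> r"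
  shows "levy_kernel' l r \<le> (1 + l) * min r (r\<^sup>2)"
proof (cases "r \<le> 1")
  case True
  have "levy_kernel' l r \<le> r * (l * r)"
    unfolding levy_kernel'_def using one_sub_exp_minus_le[of "l * r"] assms
    by (intro mult_left_mono) auto
  also have "\<dots> \<le> (1 + l) * r\<^sup>2"
    using assms by (simp add: power2_eq_square algebra_simps)
  moreover have "r\<^sup>2 \<le> r" using True assms by (simp add: power2_eq_square mult_left_le)
  ultimately show ?thesis by (simp add: min_absorb2)
next
  case False
  have "levy_kernel' l r \<le> r"
    unfolding levy_kernel'_def using assms by (simp add: mult_left_le)
  also have "\<dots> \<le> (1 + l) * r" using mult_right_mono[of 1 "1 + l" r] assms by simp
  finally show ?thesis
    using False by (simp add: min_def power2_eq_square)
qed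

lemma levy_kernel'_strict_mono: "0 < r \<Longrightarrow> b < a \<Longrightarrow> levy_kernel' b r < levy_kernel' a r"
  unfolding levy_kernel'_def by (auto intro!: mult_strict_left_mono)

lemma levy_kernel_increment_bounds:
  assumes "0 \<le> r" "0 \<le> b" "b \<le> a"
  shows "0 \<le> levy_kernel a r - levy_kernel b r"
    and "levy_kernel a r - levy_kernel b r \<le> (a - b) * levy_kernel' a r"
proof -
  have ba: "0 \<le> (a - b) * r" using assms by simp
  have "exp (- b * r) - exp (- a * r) = exp (- b * r) * (1 - exp (- ((a - b) * r)))"
    by (simp add: algebra_simps flip: exp_add)
  also have "\<dots> \<le> 1 * ((a - b) * r)"
    using one_sub_exp_minus_le[of "(a - b) * r"] assms ba by (intro mult_mono) auto
  finally show "0 \<le> levy_kernel a r - levy_kernel b r"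
    by (simp add: levy_kernel_def algebra_simps)
  have "exp (- a * r) * (1 + (a - b) * r) \<le> exp (- a * r) * exp ((a - b) * r)"
    by (intro mult_left_mono) auto
  then show "levy_kernel a r - levy_kernel b r \<le> (a - b) * levy_kernel' a r"
    by (simp add: levy_kernel_def levy_kernel'_def algebra_simps flip: exp_add)
qed

lemma levy_kernel_mono: "0 \<le> r \<Longrightarrow> 0 \<le> b \<Longrightarrow> b \<le> a \<Longrightarrow> levy_kernel b r \<le> levy_kernel a r"
  using levy_kernel_increment_bounds(1) by fastforce

lemma levy_kernel_difference_quotient_bound:
  assumes "0 \<le> r" "0 \<le> x" "0 \<le> y" "x \<noteq> y"
  shows "\<bar>(levy_kernel x r - levy_kernel y r) / (x - y)\<bar> \<le> (1 + max x y) * min r (r\<^sup>2)"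
proof -
  define a b where "a = max x y" and "b = min x y"
  have ab: "0 \<le> b" "b < a" using assms by (auto simp: a_def b_def)
  define q where "q = (levy_kernel a r - levy_kernel b r) / (a - b)"
  have "(levy_kernel x r - levy_kernel y r) / (x - y) = q"
    using assms by (cases "x \<le> y") (auto simp: q_def a_def b_def divide_simps algebra_simps)
  moreover have "0 \<le> q" "q \<le> levy_kernel' a r"
    using levy_kernel_increment_bounds[OF assms(1) ab(1) less_imp_le[OF ab(2)]] ab
    by (auto simp: q_def divide_simps mult.commute)
  moreover have "levy_kernel' a r \<le> (1 + a) * min r (r\<^sup>2)"
    using levy_kernel'_le[of a r] assms ab by simp
  ultimately show ?thesis by (simp add: a_def)
qed

section \<open>The branching mechanism and its derivative\<close>

lemma integral_pos_of_AE_pos: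
  fixes f :: "'a \<Rightarrow> real"
  assumes f: "integrable M f" and pos: "AE x in M. 0 < f x" and nontrivial: "\<not> (AE x in M. False)"
  shows "0 < integral\<^sup>L M f"
proof -
  have nonneg: "AE x in M. 0 \<le> f x" using pos by eventually_elim simp
  have "integral\<^sup>L M f \<noteq> 0"
  proof
    assume "integral\<^sup>L M f = 0"
    then have "AE x in M. f x = 0" using integral_nonneg_eq_0_iff_AE[OF f nonneg] by simp
    with pos have "AE x in M. False" by eventually_elim simp
    with nontrivial show False ..
  qed
  with integral_nonneg_AE[OF nonneg] show ?thesis by simp
qed

locale branching_mechanism =
  fixes \<alpha> \<beta> :: real and \<pi> :: "real measure"
  assumes params: "branching_params \<alpha> \<beta> \<pi>"
begin

abbreviation \<psi> :: "real \<Rightarrow> real" where "\<psi> \<equiv> psi \<alpha> \<beta> \<pi>"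

lemma alpha_nonneg: "0 \<le> \<alpha>" and beta_nonneg: "0 \<le> \<beta>" and sets_pi: "sets \<pi> = sets borel"
  using params by (auto simp: branching_params_def)

lemma borel_measurable_pi: "f \<in> borel_measurable borel \<Longrightarrow> f \<in> borel_measurable \<pi>"
  by (simp only: measurable_cong_sets[OF sets_pi refl])

lemma AE_pos: "AE r in \<pi>. 0 < r"
proof (rule AE_I')
  show "{..0} \<in> null_sets \<pi>" using params sets_pi by (auto simp: branching_params_def null_sets_def)
qed (use sets_eq_imp_space_eq[OF sets_pi] in auto)

lemma integrable_min: "integrable \<pi> (\<lambda>r. min r (r\<^sup>2))"
proof (rule integrableI_nonneg)
  show "(\<lambda>r. min r (r\<^sup>2)) \<in> borel_measurable \<pi>" by (rule borel_measurable_pi) measurable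
  show "AE r in \<pi>. 0 \<le> min r (r\<^sup>2)" using AE_pos by eventually_elim simp
  show "(\<integral>\<^sup>+ r. ennreal (min r (r\<^sup>2)) \<partial>\<pi>) < \<infinity>"
    using params by (simp add: branching_params_def)
qed

lemma integrable_of_le_min:
  assumes "f \<in> borel_measurable borel" and bound: "\<And>r. 0 < r \<Longrightarrow> \<bar>f r\<bar> \<le> K * min r (r\<^sup>2)"
  shows "integrable \<pi> f"
proof (rule Bochner_Integration.integrable_bound)
  show "integrable \<pi> (\<lambda>r. K * min r (r\<^sup>2))" using integrable_min by simp
  show "AE r in \<pi>. norm (f r) \<le> norm (K * min r (r\<^sup>2))"
    using AE_pos by eventually_elim (use bound in \<open>force intro: order_trans[OF _ abs_ge_self]\<close>)
qed (rule borel_measurable_pi[OF assms(1)])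

lemma integrable_levy_kernel: "0 \<le> l \<Longrightarrow> integrable \<pi> (levy_kernel l)"
proof (rule integrable_of_le_min[where K = "l * (1 + l)"])
  fix r :: real assume "0 \<le> l" "0 < r"
  then have "levy_kernel l r \<le> l * ((1 + l) * min r (r\<^sup>2))"
    using levy_kernel_le_mult_levy_kernel'[of l r] levy_kernel'_le[of l r]
    by (auto intro: order_trans mult_left_mono)
  then show "\<bar>levy_kernel l r\<bar> \<le> l * (1 + l) * min r (r\<^sup>2)"
    using levy_kernel_nonneg[of l r] by simp
qed simp

lemma integrable_levy_kernel': "0 \<le> l \<Longrightarrow> integrable \<pi> (levy_kernel' l)"
  by (rule integrable_of_le_min[where K = "1 + l"]) (use levy_kernel'_nonneg levy_kernel'_le in auto)

definition jump_part :: "real \<Rightarrow> real" where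
  "jump_part l = (\<integral>r. levy_kernel l r \<partial>\<pi>)"

definition jump_part' :: "real \<Rightarrow> real" where
  "jump_part' l = (\<integral>r. levy_kernel' l r \<partial>\<pi>)"

lemma psi_eq: "\<psi> l = \<alpha> * l + \<beta> * l\<^sup>2 + jump_part l"
  unfolding psi_def jump_part_def levy_kernel_def ..

lemma has_real_derivative_jump_part:
  assumes "0 < l"
  shows "(jump_part has_real_derivative jump_part' l) (at l)"
proof -
  have "(jump_part has_real_derivative jump_part' l) (at l within {0<..})"
    unfolding has_field_derivative_iff tendsto_at_iff_sequentially comp_def
  proof (intro allI impI)
    fix X :: "nat \<Rightarrow> real" assume X: "\<forall>i. X i \<in> {0<..} - {l}" and lim: "X \<longlonglongrightarrow> l"
    obtain K where K: "\<And>i. X i \<le> K"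
      using convergent_imp_Bseq[OF convergentI[OF lim]] by (metis Bseq_def abs_le_D1 real_norm_def)
    define q where "q i r = (levy_kernel (X i) r - levy_kernel l r) / (X i - l)" for i r
    have "(\<lambda>i. \<integral>r. q i r \<partial>\<pi>) \<longlonglongrightarrow> jump_part' l"
      unfolding jump_part'_def
    proof (rule integral_dominated_convergence[where w = "\<lambda>r. (1 + K + l) * min r (r\<^sup>2)"])
      show "integrable \<pi> (\<lambda>r. (1 + K + l) * min r (r\<^sup>2))"
        using integrable_min by simp
      show "AE r in \<pi>. (\<lambda>i. q i r) \<longlonglongrightarrow> levy_kernel' l r"
      proof (rule AE_I2)
        fix r
        have "((\<lambda>y. (levy_kernel y r - levy_kernel l r) / (y - l)) \<longlongrightarrow> levy_kernel' l r) (at l)"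
          using has_real_derivative_levy_kernel[of r l] by (simp add: has_field_derivative_iff)
        then show "(\<lambda>i. q i r) \<longlonglongrightarrow> levy_kernel' l r"
          using X lim unfolding tendsto_at_iff_sequentially comp_def q_def by auto
      qed
      show "AE r in \<pi>. norm (q i r) \<le> (1 + K + l) * min r (r\<^sup>2)" for i
        using AE_pos
      proof eventually_elim
        fix r :: real assume "0 < r"
        moreover have "0 < X i" "X i \<noteq> l" using X by auto
        moreover note K[of i] assms
        ultimately show "norm (q i r) \<le> (1 + K + l) * min r (r\<^sup>2)"
          using levy_kernel_difference_quotient_bound[of r "X i" l] unfolding q_def
          by (auto elim!: order_trans intro!: mult_right_mono)
      qed
    qed (auto simp: q_def intro!: borel_measurable_pi)
    moreover have "(jump_part (X i) - jump_part l) / (X i - l) = (\<integral>r. q i r \<partial>\<pi>)" for i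
      using X integrable_levy_kernel[of "X i"] integrable_levy_kernel[of l] assms
      by (auto simp: jump_part_def q_def less_imp_le)
    ultimately show "(\<lambda>i. (jump_part (X i) - jump_part l) / (X i - l)) \<longlonglongrightarrow> jump_part' l"
      by simp
  qed
  then show ?thesis using at_within_open[of l "{0<..}"] assms by simp
qed

lemma continuous_on_jump_part': "continuous_on {0..b} jump_part'"
proof (rule continuous_on_sequentiallyI)
  fix u x assume u: "\<forall>n. u n \<in> {0..b}" and lim: "u \<longlonglongrightarrow> x"
  show "(\<lambda>n. jump_part' (u n)) \<longlonglongrightarrow> jump_part' x"
    unfolding jump_part'_def
  proof (rule integral_dominated_convergence[where w = "\<lambda>r. (1 + b) * min r (r\<^sup>2)"])
    show "integrable \<pi> (\<lambda>r. (1 + b) * min r (r\<^sup>2))"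
      using integrable_min by simp
    show "AE r in \<pi>. (\<lambda>n. levy_kernel' (u n) r) \<longlonglongrightarrow> levy_kernel' x r"
      unfolding levy_kernel'_def by (intro AE_I2 tendsto_intros lim)
    show "AE r in \<pi>. norm (levy_kernel' (u n) r) \<le> (1 + b) * min r (r\<^sup>2)" for n
      using AE_pos
    proof eventually_elim
      fix r :: real assume r: "0 < r"
      have un: "0 \<le> u n" "u n \<le> b" using u by auto
      have "levy_kernel' (u n) r \<le> (1 + u n) * min r (r\<^sup>2)"
        using levy_kernel'_le un r by simp
      also have "\<dots> \<le> (1 + b) * min r (r\<^sup>2)"
        using un r by (intro mult_right_mono) auto
      finally show "norm (levy_kernel' (u n) r) \<le> (1 + b) * min r (r\<^sup>2)"
        using levy_kernel'_nonneg un r by simp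
    qed
  qed (auto intro!: borel_measurable_pi)
qed

lemma jump_part_mono: "0 \<le> b \<Longrightarrow> b \<le> a \<Longrightarrow> jump_part b \<le> jump_part a"
  unfolding jump_part_def
  by (intro integral_mono_AE integrable_levy_kernel)
     (use AE_pos levy_kernel_mono in auto)

lemma jump_part_nonneg: "0 \<le> jump_part l"
  unfolding jump_part_def by (simp add: levy_kernel_nonneg)

lemma jump_part_le: "0 \<le> l \<Longrightarrow> jump_part l \<le> l * jump_part' l"
  unfolding jump_part_def jump_part'_def
  using integral_mono[OF integrable_levy_kernel integrable_mult_right[OF integrable_levy_kernel'],
      of l l l, OF _ _ levy_kernel_le_mult_levy_kernel'] by simp

lemma mult_jump_part'_le: "0 \<le> l \<Longrightarrow> l * jump_part' l \<le> 2 * jump_part l"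
proof -
  assume l: "0 \<le> l"
  have "AE r in \<pi>. l * levy_kernel' l r \<le> 2 * levy_kernel l r"
    using AE_pos by eventually_elim (simp add: mult_levy_kernel'_le l)
  then have "(\<integral>r. l * levy_kernel' l r \<partial>\<pi>) \<le> (\<integral>r. 2 * levy_kernel l r \<partial>\<pi>)"
    by (intro integral_mono_AE integrable_mult_right integrable_levy_kernel integrable_levy_kernel' l)
  then show ?thesis by (simp add: jump_part_def jump_part'_def)
qed

lemma jump_part_trivial:
  assumes "AE r in \<pi>. False"
  shows "jump_part l = 0" and "jump_part' l = 0"
proof -
  have "(\<integral>r. f r \<partial>\<pi>) = (\<integral>r. 0 \<partial>\<pi>)" if "f \<in> borel_measurable borel" for f :: "real \<Rightarrow> real"
    by (rule integral_cong_AE) (use assms borel_measurable_pi[OF that] in auto)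
  then show "jump_part l = 0" "jump_part' l = 0"
    by (simp_all add: jump_part_def jump_part'_def)
qed

lemma jump_part_pos: "\<not> (AE r in \<pi>. False) \<Longrightarrow> 0 < l \<Longrightarrow> 0 < jump_part l"
  unfolding jump_part_def
  by (rule integral_pos_of_AE_pos[OF integrable_levy_kernel])
     (use AE_pos levy_kernel_pos in \<open>auto\<close>)

lemma jump_part'_strict_mono:
  assumes "\<not> (AE r in \<pi>. False)" "0 \<le> b" "b < a"
  shows "jump_part' b < jump_part' a"
proof -
  have "0 < (\<integral>r. levy_kernel' a r - levy_kernel' b r \<partial>\<pi>)"
    using assms AE_pos levy_kernel'_strict_mono
    by (intro integral_pos_of_AE_pos Bochner_Integration.integrable_diff integrable_levy_kernel')
       auto
  then show ?thesis
    using assms by (simp add: jump_part'_def integrable_levy_kernel')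
qed

definition \<psi>' :: "real \<Rightarrow> real" where
  "\<psi>' l = \<alpha> + 2 * \<beta> * l + jump_part' l"

lemma has_real_derivative_psi: "0 < l \<Longrightarrow> (\<psi> has_real_derivative \<psi>' l) (at l)"
proof -
  assume "0 < l"
  then have "((\<lambda>l. \<alpha> * l + \<beta> * l\<^sup>2 + jump_part l) has_real_derivative \<alpha> + 2 * \<beta> * l + jump_part' l) (at l)"
    by (auto intro!: derivative_eq_intros has_real_derivative_jump_part)
  then show ?thesis by (simp add: psi_eq[abs_def] \<psi>'_def)
qed

lemma deriv_psi: "0 < l \<Longrightarrow> deriv \<psi> l = \<psi>' l"
  by (rule DERIV_imp_deriv) (rule has_real_derivative_psi)

lemma continuous_on_psi: "continuous_on {0<..} \<psi>"
  by (rule continuous_at_imp_continuous_on) (auto intro: DERIV_isCont has_real_derivative_psi)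

lemma continuous_on_psi': "continuous_on {0..b} \<psi>'"
  unfolding \<psi>'_def by (intro continuous_intros continuous_on_jump_part')

lemma psi_mono: "0 \<le> b \<Longrightarrow> b \<le> a \<Longrightarrow> \<psi> b \<le> \<psi> a"
  unfolding psi_eq using alpha_nonneg beta_nonneg jump_part_mono[of b a]
  by (intro add_mono mult_left_mono power_mono) auto

lemma psi_nonneg: "0 \<le> l \<Longrightarrow> 0 \<le> \<psi> l"
  using psi_mono[of 0 l] by (simp add: psi_eq jump_part_def levy_kernel_def)

lemma psi_le_mult_psi': "0 \<le> l \<Longrightarrow> \<psi> l \<le> l * \<psi>' l"
  using jump_part_le[of l] mult_nonneg_nonneg[OF beta_nonneg, of "l * l"]
  by (simp add: psi_eq \<psi>'_def algebra_simps power2_eq_square)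

lemma mult_psi'_le: "0 \<le> l \<Longrightarrow> l * \<psi>' l \<le> 2 * \<psi> l"
  using mult_jump_part'_le[of l] mult_nonneg_nonneg[OF alpha_nonneg, of l]
  by (simp add: psi_eq \<psi>'_def algebra_simps power2_eq_square)

lemma psi_eq_0_if_psi_1_eq_0:
  assumes "\<psi> 1 = 0"
  shows "\<psi> l = 0"
proof -
  have "\<alpha> = 0" "\<beta> = 0" "jump_part 1 = 0"
    using assms alpha_nonneg beta_nonneg jump_part_nonneg[of 1] by (auto simp: psi_eq)
  moreover have "AE r in \<pi>. False" using jump_part_pos[of 1] \<open>jump_part 1 = 0\<close> by force
  ultimately show ?thesis using psi_eq[of l] jump_part_trivial(1) by simp
qed

lemma integral_psi_ge:
  assumes "0 < v" "v < b"
  shows "(b - v) / 2 * \<psi> ((v + b) / 2) \<le> integral {v..b} \<psi>"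
proof -
  define m where "m = (v + b) / 2"
  have vm: "v \<le> m" "m \<le> b" using assms(2) by (auto simp: m_def)
  have int: "\<psi> integrable_on {x..y}" if "0 < x" for x y
    by (rule integrable_continuous_interval, rule continuous_on_subset[OF continuous_on_psi])
       (use that in auto)
  have "integral {v..m} \<psi> + integral {m..b} \<psi> = integral {v..b} \<psi>"
    using assms by (intro Henstock_Kurzweil_Integration.integral_combine vm int)
  moreover have "0 \<le> integral {v..m} \<psi>"
    using assms int psi_nonneg by (intro integral_nonneg) auto
  moreover have "(b - m) * \<psi> m \<le> integral {m..b} \<psi>"
    using integral_le[OF integrable_const_ivl int[of m b], of "\<psi> m"] assms vm psi_mono by simp
  moreover have "b - m = (b - v) / 2" by (simp add: m_def field_simps)
  ultimately show ?thesis by (simp add: m_def[symmetric])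
qed

end

section \<open>Consequences of the growth exponent\<close>

lemma delta_exp_gt_1_imp_growth:
  assumes "delta_exp \<Psi> > 1"
  obtains c C where "1 < c" "0 < C"
    and "\<And>m l. 1 \<le> m \<Longrightarrow> m \<le> l \<Longrightarrow> C * \<Psi> m * (l / m) powr c \<le> \<Psi> l"
proof -
  obtain c C where c: "1 < c" "0 < C"
    and grow: "\<And>m l. 1 \<le> m \<Longrightarrow> m \<le> l \<Longrightarrow> C * \<Psi> m * m powr (- c) \<le> \<Psi> l * l powr (- c)"
    using assms unfolding delta_exp_def less_Sup_iff by auto
  have "C * \<Psi> m * (l / m) powr c \<le> \<Psi> l" if "1 \<le> m" "m \<le> l" for m l
  proof -
    have "C * \<Psi> m * m powr (- c) * l powr c \<le> \<Psi> l * l powr (- c) * l powr c"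
      using grow[OF that] by (rule mult_right_mono) simp
    moreover have "(l / m) powr c = m powr (- c) * l powr c"
      using that by (simp add: powr_divide powr_minus_divide)
    moreover have "l powr (- c) * l powr c = 1"
      using that by (simp add: powr_add[symmetric])
    ultimately show ?thesis by (simp add: mult.assoc)
  qed
  with c that show thesis by blast
qed

lemma inv_sqrt_le_of_powr_le:
  fixes a s p X :: real
  assumes "0 < a" "0 < s" "a * s powr p \<le> X"
  shows "1 / sqrt X \<le> s powr (- p / 2) / sqrt a"
proof -
  have sqrt_eq: "sqrt (a * s powr p) = sqrt a * s powr (p / 2)"
    using assms(2) by (simp only: real_sqrt_mult powr_half_sqrt_powr[symmetric] less_imp_le)
  have "s powr (- p / 2) = inverse (s powr (p / 2))"
    by (simp only: minus_divide_left[symmetric] powr_minus)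
  then have inv_eq: "1 / (sqrt a * s powr (p / 2)) = s powr (- p / 2) / sqrt a"
    by (simp add: field_simps)
  have pos: "0 < sqrt (a * s powr p)" using assms by simp
  moreover have le: "sqrt (a * s powr p) \<le> sqrt X" using assms(3) by (rule real_sqrt_le_mono)
  ultimately have "1 / sqrt X \<le> 1 / sqrt (a * s powr p)"
    by (intro divide_left_mono) (auto intro: mult_pos_pos order_less_le_trans[OF pos le])
  then show ?thesis unfolding sqrt_eq inv_eq .
qed

locale branching_mechanism_with_growth = branching_mechanism +
  fixes c C :: real
  assumes c_gt_1: "1 < c" and C_pos: "0 < C"
    and psi_growth: "\<And>m l. 1 \<le> m \<Longrightarrow> m \<le> l \<Longrightarrow> C * psi \<alpha> \<beta> \<pi> m * (l / m) powr c \<le> psi \<alpha> \<beta> \<pi> l"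
    and psi_1_pos: "0 < psi \<alpha> \<beta> \<pi> 1"
begin

lemma psi_pos: "1 \<le> l \<Longrightarrow> 0 < \<psi> l"
  using psi_mono[of 1 l] psi_1_pos by simp

lemma psi'_unbounded: "\<exists>l\<ge>1. y \<le> \<psi>' l"
proof -
  define l where "l = max 1 ((\<bar>y\<bar> / (C * \<psi> 1)) powr (1 / (c - 1)))"
  have l: "1 \<le> l" by (simp add: l_def)
  have "\<bar>y\<bar> / (C * \<psi> 1) = ((\<bar>y\<bar> / (C * \<psi> 1)) powr (1 / (c - 1))) powr (c - 1)"
    using c_gt_1 C_pos psi_1_pos by (simp add: powr_powr)
  also have "\<dots> \<le> l powr (c - 1)"
    using c_gt_1 by (intro powr_mono2) (auto simp: l_def)
  finally have "\<bar>y\<bar> \<le> C * \<psi> 1 * l powr c / l"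
    using C_pos psi_1_pos l by (simp add: powr_diff field_simps)
  also have "\<dots> \<le> \<psi> l / l"
    using psi_growth[OF order_refl l] l by (intro divide_right_mono) auto
  also have "\<dots> \<le> \<psi>' l"
    using psi_le_mult_psi'[of l] l by (simp add: divide_simps mult.commute)
  finally show ?thesis using l by (intro exI[of _ l]) auto
qed

lemma psi'_strict_mono:
  assumes "0 \<le> b" "b < a"
  shows "\<psi>' b < \<psi>' a"
proof (cases "AE r in \<pi>. False")
  case True
  txt \<open>With \<open>\<pi> = 0\<close> and \<open>\<beta> = 0\<close>, \<open>\<psi>'\<close> would be constant, contradicting its unboundedness.\<close>
  have "\<beta> \<noteq> 0"
  proof
    assume "\<beta> = 0"
    then have "\<psi>' l = \<alpha>" for l unfolding \<psi>'_def using True by (simp add: jump_part_trivial)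
    then show False using psi'_unbounded[of "\<alpha> + 1"] by auto
  qed
  then show ?thesis
    using True beta_nonneg assms by (simp add: \<psi>'_def jump_part_trivial)
next
  case False
  then show ?thesis
    using jump_part'_strict_mono[OF False assms] beta_nonneg assms unfolding \<psi>'_def
    by (intro add_le_less_mono) (auto intro: mult_left_mono)
qed

lemma psi'_inverse_ge:
  assumes "0 < v" "\<psi>' v \<le> y"
  shows "y \<in> deriv \<psi> ` {0<..}" and "v \<le> the_inv_into {0<..} (deriv \<psi>) y"
proof -
  obtain u where u: "1 \<le> u" "y \<le> \<psi>' u" using psi'_unbounded by blast
  define w where "w = max u v"
  have "y \<le> \<psi>' w"
    using u psi'_strict_mono[of u w] by (cases "u < v") (auto simp: w_def)
  then obtain x where x: "v \<le> x" "x \<le> w" "\<psi>' x = y"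
    using IVT'[of \<psi>' v y w] assms continuous_on_subset[OF continuous_on_psi', of "{v..w}" w]
    by (auto simp: w_def)
  have x_pos: "0 < x" and deriv_x: "deriv \<psi> x = y"
    using x assms deriv_psi by auto
  have "inj_on \<psi>' {0<..}"
    by (rule strict_mono_on_imp_inj_on) (auto simp: strict_mono_on_def intro: psi'_strict_mono)
  then have "inj_on (deriv \<psi>) {0<..}"
    by (rule inj_on_cong[THEN iffD2, rotated]) (simp add: deriv_psi)
  then have "the_inv_into {0<..} (deriv \<psi>) y = x"
    using the_inv_into_f_f x_pos deriv_x by fastforce
  then show "v \<le> the_inv_into {0<..} (deriv \<psi>) y" using x by simp
  show "y \<in> deriv \<psi> ` {0<..}" using x_pos deriv_x by (auto intro: rev_image_eqI)
qed

text \<open>After substituting \<open>b = v (1 + s)\<close>, the integrand of \<open>I(v)\<close> is at most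
  \<open>I_majorant s / \<surd>(v \<psi>(v))\<close>: on the upper half of \<open>[v, b]\<close>, \<open>\<psi>\<close> is at least \<open>\<psi>(v)\<close>,
  and at least \<open>C \<psi>(v) (s/2)\<^sup>c\<close> once \<open>s > 1\<close>.\<close>

definition I_majorant :: "real \<Rightarrow> real" where
  "I_majorant s =
     (if s \<in> {0..1} then sqrt 2 * s powr (- 1 / 2) else 0) +
     (if s \<in> {1..} then sqrt (2 powr (c + 1) / C) * s powr (- (1 + c) / 2) else 0)"

definition I_const :: real where
  "I_const = 2 * sqrt 2 + 2 * sqrt (2 powr (c + 1) / C) / (c - 1)"

lemma I_majorant_nonneg: "0 \<le> I_majorant s"
  using C_pos by (simp add: I_majorant_def)

lemma I_const_pos: "0 < I_const"
  using c_gt_1 C_pos by (simp add: I_const_def add_pos_nonneg)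

lemma has_integral_I_majorant: "(I_majorant has_integral I_const) UNIV"
proof -
  have "((\<lambda>s. sqrt 2 * s powr (- 1 / 2)) has_integral sqrt 2 * (1 powr (- 1 / 2 + 1) / (- 1 / 2 + 1))) {0..1}"
    by (intro has_integral_mult_right has_integral_powr_from_0) auto
  then have near: "((\<lambda>s. sqrt 2 * s powr (- 1 / 2)) has_integral 2 * sqrt 2) {0..1}"
    by (simp add: mult.commute)
  have "((\<lambda>s. sqrt (2 powr (c + 1) / C) * s powr (- (1 + c) / 2)) has_integral
      sqrt (2 powr (c + 1) / C) * (- (1 powr (- (1 + c) / 2 + 1)) / (- (1 + c) / 2 + 1))) {1..}"
    using c_gt_1 by (intro has_integral_mult_right has_integral_powr_to_inf) auto
  moreover have "sqrt (2 powr (c + 1) / C) * (- (1 powr (- (1 + c) / 2 + 1)) / (- (1 + c) / 2 + 1))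
      = 2 * sqrt (2 powr (c + 1) / C) / (c - 1)"
    using c_gt_1 by (simp add: field_simps)
  ultimately have far: "((\<lambda>s. sqrt (2 powr (c + 1) / C) * s powr (- (1 + c) / 2)) has_integral
      2 * sqrt (2 powr (c + 1) / C) / (c - 1)) {1..}"
    by metis
  have "((\<lambda>s. if s \<in> {0..1} then sqrt 2 * s powr (- 1 / 2) else 0) has_integral 2 * sqrt 2) UNIV"
    using near by (subst has_integral_restrict) auto
  moreover have "((\<lambda>s. if s \<in> {1..} then sqrt (2 powr (c + 1) / C) * s powr (- (1 + c) / 2) else 0)
      has_integral 2 * sqrt (2 powr (c + 1) / C) / (c - 1)) UNIV"
    using far by (subst has_integral_restrict) auto
  ultimately show ?thesis
    unfolding I_majorant_def I_const_def by (rule has_integral_add)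
qed

lemma inv_sqrt_integral_psi_le:
  assumes v: "1 \<le> v" and s: "0 < s"
  shows "1 / sqrt (integral {v..v + v * s} \<psi>) \<le> I_majorant s / sqrt (v * \<psi> v)"
proof -
  define m where "m = v * (1 + s / 2)"
  have vm: "v \<le> m" using v s by (simp add: m_def)
  have pos: "0 < v * \<psi> v" using v psi_pos[of v] by simp
  have "(v + (v + v * s)) / 2 = m" by (simp add: m_def field_simps)
  then have lower: "v * s / 2 * \<psi> m \<le> integral {v..v + v * s} \<psi>"
    using integral_psi_ge[of v "v + v * s"] v s by simp
  have rescale: "x / sqrt (y * d) = sqrt (1 / d) * x / sqrt y" for x y d :: real
    by (simp add: real_sqrt_mult real_sqrt_divide)
  show ?thesis
  proof (cases "s \<le> 1")
    case True
    have "v * s / 2 * \<psi> v \<le> v * s / 2 * \<psi> m"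
      using psi_mono[of v m] v vm s by (intro mult_left_mono) auto
    moreover have "s powr 1 = s" using s by simp
    ultimately have near: "v * \<psi> v * (1 / 2) * s powr 1 \<le> integral {v..v + v * s} \<psi>"
      using lower by (simp add: algebra_simps)
    have "1 / sqrt (integral {v..v + v * s} \<psi>) \<le> s powr (- 1 / 2) / sqrt (v * \<psi> v * (1 / 2))"
      by (rule inv_sqrt_le_of_powr_le[OF _ s near]) (use pos in simp)
    also have "\<dots> = sqrt 2 * s powr (- 1 / 2) / sqrt (v * \<psi> v)"
      unfolding rescale by simp
    also have "\<dots> \<le> I_majorant s / sqrt (v * \<psi> v)"
      using True s C_pos pos by (intro divide_right_mono) (auto simp: I_majorant_def)
    finally show ?thesis .
  next
    case False
    have "C * \<psi> v * (s / 2) powr c \<le> C * \<psi> v * (m / v) powr c"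
      using v s c_gt_1 C_pos psi_pos[of v] by (intro mult_left_mono powr_mono2) (auto simp: m_def)
    also have "\<dots> \<le> \<psi> m" by (rule psi_growth[OF v vm])
    finally have growth: "v * s / 2 * (C * \<psi> v * (s / 2) powr c) \<le> v * s / 2 * \<psi> m"
      using v s by (intro mult_left_mono) auto
    have e1: "(s / 2) powr c = s powr c / 2 powr c" using s by (simp add: powr_divide)
    have e2: "s powr (1 + c) = s * s powr c" using s by (simp add: powr_add)
    have e3: "2 powr (c + 1) = 2 * 2 powr c" by (simp add: powr_add)
    have "v * \<psi> v * (C / 2 powr (c + 1)) * s powr (1 + c) = v * s / 2 * (C * \<psi> v * (s / 2) powr c)"
      unfolding e1 e2 e3 by (simp add: field_simps)
    also note growth
    also note lower
    finally have far: "v * \<psi> v * (C / 2 powr (c + 1)) * s powr (1 + c) \<le> integral {v..v + v * s} \<psi>" .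
    have "1 / sqrt (integral {v..v + v * s} \<psi>)
        \<le> s powr (- (1 + c) / 2) / sqrt (v * \<psi> v * (C / 2 powr (c + 1)))"
      by (rule inv_sqrt_le_of_powr_le[OF _ s far]) (use pos C_pos in simp)
    also have "\<dots> = sqrt (2 powr (c + 1) / C) * s powr (- (1 + c) / 2) / sqrt (v * \<psi> v)"
      unfolding rescale by simp
    also have "\<dots> \<le> I_majorant s / sqrt (v * \<psi> v)"
      using False s pos by (intro divide_right_mono) (auto simp: I_majorant_def)
    finally show ?thesis .
  qed
qed

lemma I_fun_le:
  assumes v: "1 \<le> v"
  shows "I_fun \<psi> v \<le> ennreal (I_const * sqrt (v / \<psi> v))"
proof -
  define k where "k = sqrt (v * \<psi> v)"
  have k: "0 < k" using v psi_pos[of v] by (simp add: k_def)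
  have [measurable]: "I_majorant \<in> borel_measurable borel"
    unfolding I_majorant_def by measurable
  have "I_fun \<psi> v \<le> (\<integral>\<^sup>+ b. ennreal (I_majorant ((b - v) / v) / k) \<partial>lborel)"
    unfolding I_fun_def
  proof (rule nn_integral_mono)
    fix b :: real
    have "1 / sqrt (integral {v..b} \<psi>) \<le> I_majorant ((b - v) / v) / k" if "v < b"
      using inv_sqrt_integral_psi_le[OF v, of "(b - v) / v"] v that by (simp add: k_def)
    then show "indicator {v<..} b * ennreal (1 / sqrt (integral {v..b} \<psi>))
        \<le> ennreal (I_majorant ((b - v) / v) / k)"
      by (cases "v < b") (auto intro: ennreal_leI)
  qed
  also have "\<dots> = ennreal v * (\<integral>\<^sup>+ s. ennreal (I_majorant s / k) \<partial>lborel)"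
    using nn_integral_real_affine[of "\<lambda>b. ennreal (I_majorant ((b - v) / v) / k)" v v] v
    by simp
  also have "(\<integral>\<^sup>+ s. ennreal (I_majorant s / k) \<partial>lborel) = ennreal (I_const / k)"
    using has_integral_divide[OF has_integral_I_majorant, of k] k I_majorant_nonneg
    by (intro nn_integral_has_integral_lborel) auto
  also have "ennreal v * ennreal (I_const / k) = ennreal (I_const * sqrt (v / \<psi> v))"
    using v psi_pos[of v] I_const_pos k
    by (simp add: ennreal_mult'[symmetric] k_def real_sqrt_mult real_sqrt_divide field_simps)
  finally show ?thesis .
qed

lemma psi'_le_of_le_I_fun:
  assumes v: "1 \<le> v" and r: "0 < r" and rI: "ennreal r \<le> I_fun \<psi> v"
  shows "\<psi>' v \<le> 2 * I_const\<^sup>2 / r\<^sup>2"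
proof -
  have P: "0 < \<psi> v" using psi_pos v by simp
  have "r \<le> I_const * sqrt (v / \<psi> v)"
    using order_trans[OF rI I_fun_le[OF v]] I_const_pos v P by simp
  then have "r\<^sup>2 \<le> I_const\<^sup>2 * v / \<psi> v"
    using r v P power_mono[of r "I_const * sqrt (v / \<psi> v)" 2]
    by (simp add: power_mult_distrib)
  moreover have "\<psi>' v \<le> 2 * \<psi> v / v"
    using mult_psi'_le[of v] v by (simp add: field_simps)
  moreover have "0 < v * \<psi>' v" using psi_le_mult_psi'[of v] P v by linarith
  then have "0 \<le> \<psi>' v" using v by (simp add: zero_less_mult_iff)
  ultimately have "\<psi>' v * r\<^sup>2 \<le> 2 * \<psi> v / v * (I_const\<^sup>2 * v / \<psi> v)"
    by (intro mult_mono) auto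
  also have "\<dots> = 2 * I_const\<^sup>2" using v P by (simp add: field_simps)
  finally show ?thesis using r by (simp add: field_simps)
qed

end

theorem lemma3p2:
  fixes \<alpha> \<beta> :: real and \<pi> :: "real measure"
  assumes "branching_params \<alpha> \<beta> \<pi>"
    and "delta_exp (psi \<alpha> \<beta> \<pi>) > 1"
  shows "\<exists>C>0. \<forall>v r. v > 1 \<and> r > 0 \<and> ennreal r \<le> I_fun (psi \<alpha> \<beta> \<pi>) v \<longrightarrow>
           4 * C / r\<^sup>2 \<in> deriv (psi \<alpha> \<beta> \<pi>) ` {0<..} \<and>
           v \<le> the_inv_into {0<..} (deriv (psi \<alpha> \<beta> \<pi>)) (4 * C / r\<^sup>2)"
proof -
  interpret branching_mechanism \<alpha> \<beta> \<pi> by unfold_locales (rule assms(1))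
  obtain c C where growth: "1 < c" "0 < C"
    "\<And>m l. 1 \<le> m \<Longrightarrow> m \<le> l \<Longrightarrow> C * \<psi> m * (l / m) powr c \<le> \<psi> l"
    using delta_exp_gt_1_imp_growth[OF assms(2)] by blast
  show ?thesis
  proof (cases "\<psi> 1 = 0")
    case True
    txt \<open>Then \<open>\<psi>\<close> vanishes and \<open>I_fun\<close> is \<open>0\<close>, as \<open>1 / sqrt 0 = 0\<close>; the claim is vacuous.\<close>
    then have "\<psi> = (\<lambda>_. 0)" using psi_eq_0_if_psi_1_eq_0 by blast
    then have "I_fun \<psi> v = 0" for v by (simp add: I_fun_def)
    then show ?thesis by (intro exI[of _ 1]) auto
  next
    case False
    interpret branching_mechanism_with_growth \<alpha> \<beta> \<pi> c C
      using growth False psi_nonneg[of 1] by unfold_locales auto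
    have "4 * (I_const\<^sup>2 / 2) / r\<^sup>2 \<in> deriv \<psi> ` {0<..} \<and>
        v \<le> the_inv_into {0<..} (deriv \<psi>) (4 * (I_const\<^sup>2 / 2) / r\<^sup>2)"
      if "1 < v" "0 < r" "ennreal r \<le> I_fun \<psi> v" for v r
      using psi'_inverse_ge[of v] psi'_le_of_le_I_fun[of v r] that by simp
    then show ?thesis using I_const_pos by (intro exI[of _ "I_const\<^sup>2 / 2"]) auto
  qed
qed

end
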